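(* Let $m\ge1$ and $A=(a_0,\ldots,a_m)$ real with $a_0,a_m\ne0$. Suppose $\omega\in\mathbb{C}$ satisfies $P_A(\omega)=0$ and $|\omega|>1$. Then for every $\varepsilon>0$ there exists $n_0$ such that for every $n>n_0$ the polynomial $U_{n,A}$ has a (complex) root $\xi$ with $\left|\xi-\tfrac12(\omega+\omega^{-1})\right|<\varepsilon$.
   Context: $U_k$ denotes the Chebyshev polynomial of the second kind, $U_k(\cos\theta)=\frac{\sin(k+1)\theta}{\sin\theta}$. For $A=(a_0,\ldots,a_m)$ real with $a_0,a_m\ne0$ and $n\ge m$, $U_{n,A}(x)=\sum_{i=0}^m a_iU_{n-i}(x)$ and $P_A(x)=\sum_{i=0}^m a_ix^{m-i}$. *)

theory Defs
  imports "HOL-Analysis.Analysis"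
begin

text \<open>Chebyshev polynomials of the second kind, evaluated at a complex point,
  via the standard recurrence U_0 = 1, U_1 = 2x, U_(k+2) = 2x U_(k+1) - U_k
  (equivalently U_k(cos t) = sin((k+1)t)/sin t).\<close>
fun chebU :: "nat \<Rightarrow> complex \<Rightarrow> complex" where
  "chebU 0 x = 1"
| "chebU (Suc 0) x = 2 * x"
| "chebU (Suc (Suc k)) x = 2 * x * chebU (Suc k) x - chebU k x"

definition UnA :: "nat \<Rightarrow> nat \<Rightarrow> (nat \<Rightarrow> real) \<Rightarrow> complex \<Rightarrow> complex" where
  "UnA n m a x = (\<Sum>i\<le>m. complex_of_real (a i) * chebU (n - i) x)"

definition PA :: "nat \<Rightarrow> (nat \<Rightarrow> real) \<Rightarrow> complex \<Rightarrow> complex" where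
  "PA m a x = (\<Sum>i\<le>m. complex_of_real (a i) * x ^ (m - i))"

end

theory Submission
  imports Defs "HOL-Computational_Algebra.Fundamental_Theorem_Algebra" "HOL-Real_Asymp.Real_Asymp"
begin

text \<open>Substituting x = (z + 1/z)/2 turns (z - 1/z) U_k(x) into z^(k+1) - z^-(k+1), so up to the
  factor z^(n+1) (z - 1/z) the value U_{n,A}(x) is z^e P_A(z) - R(z), where e = 2n + 2 - m and R is
  the reciprocal polynomial of P_A. Since P_A(\<omega>) = 0 and |\<omega>| > 1, this polynomial has a root near
  \<omega> once e is large: expanded around \<omega>, its constant coefficient -R(\<omega>) does not depend on e,
  while its coefficient of order ord_\<omega> P_A grows like |\<omega>|^e, which Vieta's formulas forbid if all
  roots stay at distance \<delta> from \<omega>. A root z near \<omega> then yields the root (z + 1/z)/2 of U_{n,A}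
  near (\<omega> + 1/\<omega>)/2.\<close>

lemma norm_coeff_le_of_roots_outside_ball:
  fixes g :: "complex poly"
  assumes "\<delta> > 0" and "\<And>t. poly g t = 0 \<Longrightarrow> norm t \<ge> \<delta>"
  shows "norm (coeff g k) \<le> real (degree g choose k) * norm (coeff g 0) / \<delta> ^ k"
  using assms(2)
proof (induction "degree g" arbitrary: g k)
  case 0
  then show ?case
    by (cases k) (simp_all add: coeff_eq_0)
next
  case (Suc d g)
  then obtain r where r: "poly g r = 0"
    using fundamental_theorem_of_algebra[of g] by (auto simp: constant_degree)
  then obtain h where g: "g = [:-r, 1:] * h"
    by (auto simp: poly_eq_0_iff_dvd elim: dvdE)
  have "h \<noteq> 0"
    using Suc.hyps(2) g by auto
  then have "degree g = Suc (degree h)"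
    unfolding g by (subst degree_mult_eq) auto
  then have d: "d = degree h"
    using Suc.hyps(2) by simp
  have IH: "norm (coeff h j) \<le> real (d choose j) * norm (coeff h 0) / \<delta> ^ j" for j
    using Suc.hyps(1)[OF d] Suc.prems g d by auto
  have r_ge: "norm r \<ge> \<delta>"
    using Suc.prems r by simp
  have g_split: "g = smult (-r) h + pCons 0 h"
    using g by simp
  define A where "A = norm (coeff h 0)"
  show ?case
  proof (cases k)
    case 0
    then show ?thesis by simp
  next
    case (Suc j)
    have "norm (coeff g k) \<le> norm r * norm (coeff h (Suc j)) + norm (coeff h j)"
      using norm_triangle_ineq[of "- r * coeff h (Suc j)" "coeff h j"]
      by (simp add: g_split Suc norm_mult)
    also have "\<dots> \<le> norm r * (real (d choose Suc j) * A / \<delta> ^ Suc j)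
        + real (d choose j) * A * \<delta> / \<delta> ^ Suc j"
      using IH[of "Suc j"] IH[of j] \<open>\<delta> > 0\<close> unfolding A_def
      by (intro add_mono mult_left_mono) auto
    also have "\<dots> \<le> norm r * (real (d choose Suc j) * A / \<delta> ^ Suc j)
        + real (d choose j) * A * norm r / \<delta> ^ Suc j"
      using r_ge \<open>\<delta> > 0\<close> by (intro add_left_mono divide_right_mono mult_left_mono) (auto simp: A_def)
    also have "\<dots> = real (Suc d choose Suc j) * (norm r * A) / \<delta> ^ Suc j"
      using \<open>\<delta> > 0\<close> by (simp add: field_simps)
    finally show ?thesis
      using Suc Suc.hyps(2) g_split by (simp add: A_def norm_mult)
  qed
qed

lemma norm_coeff_le_pow_of_roots_outside_ball:
  fixes g :: "complex poly"
  assumes "\<delta> > 0" and "\<And>t. poly g t = 0 \<Longrightarrow> norm t \<ge> \<delta>" and "degree g \<le> D"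
  shows "norm (coeff g k) \<le> real D ^ k * norm (coeff g 0) / \<delta> ^ k"
proof -
  have "degree g choose k \<le> D ^ k"
    using binomial_le_pow[of k "degree g"] power_mono[OF \<open>degree g \<le> D\<close>, of k]
    by (cases "k \<le> degree g") (auto simp: binomial_eq_0)
  then have "real (degree g choose k) \<le> real D ^ k"
    by (metis of_nat_le_iff of_nat_power)
  then show ?thesis
    using norm_coeff_le_of_roots_outside_ball[OF assms(1,2), where k=k] \<open>\<delta> > 0\<close>
    by (smt (verit) divide_right_mono mult_right_mono norm_ge_zero zero_le_power)
qed

lemma chebU_Joukowski:
  fixes z :: complex
  assumes "z \<noteq> 0"
  shows "chebU k ((z + inverse z) / 2) * (z - inverse z) = z ^ Suc k - inverse z ^ Suc k"
proof -
  define w where "w = inverse z"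
  have zw: "z * w = 1"
    using assms by (simp add: w_def)
  have "chebU k ((z + w) / 2) * (z - w) = z ^ Suc k - w ^ Suc k \<and>
        chebU (Suc k) ((z + w) / 2) * (z - w) = z ^ Suc (Suc k) - w ^ Suc (Suc k)"
  proof (induction k)
    case 0
    show ?case
      using zw by (simp add: field_simps power2_eq_square)
  next
    case (Suc k)
    have "chebU (Suc (Suc k)) ((z + w) / 2) * (z - w)
        = (z + w) * (chebU (Suc k) ((z + w) / 2) * (z - w)) - chebU k ((z + w) / 2) * (z - w)"
      by (simp add: field_simps)
    also have "\<dots> = (z + w) * (z ^ Suc (Suc k) - w ^ Suc (Suc k)) - (z ^ Suc k - w ^ Suc k)"
      using Suc by simp
    also have "\<dots> = z ^ Suc (Suc (Suc k)) - w ^ Suc (Suc (Suc k))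
        + (z * w - 1) * (z ^ Suc k - w ^ Suc k)"
      by (simp add: algebra_simps)
    finally show ?case
      using Suc zw by simp
  qed
  then show ?thesis
    by (simp add: w_def)
qed

lemma norm_Joukowski_diff_le:
  fixes z \<omega> :: complex
  assumes "norm z \<ge> 1" and "norm \<omega> \<ge> 1"
  shows "norm ((z + inverse z) / 2 - (\<omega> + inverse \<omega>) / 2) \<le> norm (z - \<omega>)"
proof -
  have "z \<noteq> 0" "\<omega> \<noteq> 0"
    using assms by auto
  have "norm (inverse z - inverse \<omega>) = norm (z - \<omega>) / (norm z * norm \<omega>)"
    using \<open>z \<noteq> 0\<close> \<open>\<omega> \<noteq> 0\<close>
    by (simp add: division_ring_inverse_diff norm_mult norm_inverse norm_minus_commute
        divide_inverse mult_ac)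
  also have "\<dots> \<le> norm (z - \<omega>)"
    using assms mult_mono[OF assms] by (simp add: divide_le_eq mult_le_cancel_left1)
  finally have "norm (z - \<omega> + (inverse z - inverse \<omega>)) \<le> 2 * norm (z - \<omega>)"
    by (smt (verit) norm_triangle_ineq)
  moreover have "(z + inverse z) / 2 - (\<omega> + inverse \<omega>) / 2 = (z - \<omega> + (inverse z - inverse \<omega>)) / 2"
    by (simp add: field_simps)
  ultimately show ?thesis
    by (metis norm_divide norm_numeral mult.commute pos_divide_le_eq zero_less_numeral)
qed

lemma coeff_pcompose_shift_monom_mult:
  fixes q :: "'a::comm_ring_1 poly"
  shows "coeff ((monom 1 e * ([:-\<omega>, 1:] ^ k * q)) \<circ>\<^sub>p [:\<omega>, 1:]) k = \<omega> ^ e * poly q \<omega>"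
proof -
  have "([:-\<omega>, 1:] ^ k) \<circ>\<^sub>p [:\<omega>, 1:] = monom 1 k"
    by (induction k) (simp_all only: power_Suc power_0 pcompose_mult pcompose_1,
        simp_all add: pcompose_pCons monom_altdef)
  then have "(monom 1 e * ([:-\<omega>, 1:] ^ k * q)) \<circ>\<^sub>p [:\<omega>, 1:]
      = monom 1 k * ((monom 1 e * q) \<circ>\<^sub>p [:\<omega>, 1:])"
    by (simp add: pcompose_mult mult_ac)
  then show ?thesis
    by (simp add: coeff_monom_mult poly_0_coeff_0[symmetric] poly_pcompose poly_monom)
qed

lemma eventually_root_near_root:
  fixes p r :: "complex poly"
  assumes "p \<noteq> 0" and "poly p \<omega> = 0" and "norm \<omega> > 1" and "\<delta> > 0"
  shows "eventually (\<lambda>e. \<exists>z. poly (monom 1 e * p - r) z = 0 \<and> norm (z - \<omega>) < \<delta>) sequentially"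
proof -
  obtain q where p: "p = [:-\<omega>, 1:] ^ order \<omega> p * q" and "\<not> [:-\<omega>, 1:] dvd q"
    using order_decomp[OF \<open>p \<noteq> 0\<close>] by blast
  then have "poly q \<omega> \<noteq> 0"
    by (simp add: poly_eq_0_iff_dvd)
  define k where "k = order \<omega> p"
  define g where "g e = (monom 1 e * p - r) \<circ>\<^sub>p [:\<omega>, 1:]" for e
  define B where "B = norm (coeff (r \<circ>\<^sub>p [:\<omega>, 1:]) k)"
  define C where "C = norm (poly r \<omega>)"
  define d where "d = degree p + degree r"
  have coeff_k: "coeff (g e) k = \<omega> ^ e * poly q \<omega> - coeff (r \<circ>\<^sub>p [:\<omega>, 1:]) k" for e
    using coeff_pcompose_shift_monom_mult[of e \<omega> k q] p
    by (simp add: g_def pcompose_diff k_def)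
  have coeff_0: "coeff (g e) 0 = - poly r \<omega>" for e
    using \<open>poly p \<omega> = 0\<close> by (simp add: g_def poly_0_coeff_0 poly_pcompose)
  have degree_g: "degree (g e) \<le> e + d" for e
  proof -
    have "degree (monom 1 e * p) \<le> e + degree p"
      by (metis add_le_mono1 degree_monom_le degree_mult_le order.trans)
    then show ?thesis
      using degree_diff_le_max[of "monom 1 e * p" r]
      by (simp add: g_def degree_pcompose d_def)
  qed
  have "eventually (\<lambda>e. B + (real e + real d) ^ k * (C / \<delta> ^ k) < M * \<rho> ^ e) sequentially"
    if "\<rho> > 1" and "M > 0" for \<rho> M :: real
    using that by real_asymp
  then have "eventually (\<lambda>e. B + (real e + real d) ^ k * (C / \<delta> ^ k) < norm (poly q \<omega>) * norm \<omega> ^ e)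
      sequentially"
    using \<open>norm \<omega> > 1\<close> \<open>poly q \<omega> \<noteq> 0\<close> by simp
  then show ?thesis
  proof (rule eventually_mono)
    fix e
    assume large: "B + (real e + real d) ^ k * (C / \<delta> ^ k) < norm (poly q \<omega>) * norm \<omega> ^ e"
    show "\<exists>z. poly (monom 1 e * p - r) z = 0 \<and> norm (z - \<omega>) < \<delta>"
    proof (rule ccontr)
      assume "\<not> ?thesis"
      then have "poly (g e) t = 0 \<Longrightarrow> norm t \<ge> \<delta>" for t
        by (auto simp: g_def poly_pcompose)
      then have "norm (coeff (g e) k) \<le> (real e + real d) ^ k * (C / \<delta> ^ k)"
        using norm_coeff_le_pow_of_roots_outside_ball[OF \<open>\<delta> > 0\<close> _ degree_g, of e k]
        by (simp add: coeff_0 C_def)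
      then have "norm \<omega> ^ e * norm (poly q \<omega>) - B \<le> (real e + real d) ^ k * (C / \<delta> ^ k)"
        using norm_triangle_ineq2[of "\<omega> ^ e * poly q \<omega>" "coeff (r \<circ>\<^sub>p [:\<omega>, 1:]) k"]
        by (simp add: coeff_k B_def norm_mult norm_power)
      then show False
        using large by (simp add: mult.commute)
    qed
  qed
qed

definition PA_poly :: "nat \<Rightarrow> (nat \<Rightarrow> real) \<Rightarrow> complex poly" where
  "PA_poly m a = (\<Sum>i\<le>m. monom (complex_of_real (a i)) (m - i))"

definition PA_reciprocal_poly :: "nat \<Rightarrow> (nat \<Rightarrow> real) \<Rightarrow> complex poly" where
  "PA_reciprocal_poly m a = (\<Sum>i\<le>m. monom (complex_of_real (a i)) i)"

lemma poly_PA_poly: "poly (PA_poly m a) x = PA m a x"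
  by (simp add: PA_poly_def PA_def poly_sum poly_monom)

lemma poly_PA_reciprocal_poly: "poly (PA_reciprocal_poly m a) x = (\<Sum>i\<le>m. complex_of_real (a i) * x ^ i)"
  by (simp add: PA_reciprocal_poly_def poly_sum poly_monom)

lemma PA_poly_nonzero:
  assumes "a m \<noteq> 0"
  shows "PA_poly m a \<noteq> 0"
proof -
  have "poly (PA_poly m a) 0 = complex_of_real (a m)"
    by (simp add: poly_PA_poly PA_def power_0_left if_distrib cong: if_cong)
  then show ?thesis
    using assms by auto
qed

lemma UnA_Joukowski:
  fixes z :: complex
  assumes "z \<noteq> 0" and "m \<le> n"
  shows "z ^ (n + 1) * ((z - inverse z) * UnA n m a ((z + inverse z) / 2))
    = poly (monom 1 (2 * n + 2 - m) * PA_poly m a - PA_reciprocal_poly m a) z"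
proof -
  have term_eq: "z ^ (n + 1) * (z ^ Suc (n - i) - inverse z ^ Suc (n - i))
      = z ^ (2 * n + 2 - m) * z ^ (m - i) - z ^ i" if "i \<le> m" for i
  proof -
    have "n + 1 + Suc (n - i) = 2 * n + 2 - m + (m - i)"
      using that \<open>m \<le> n\<close> by arith
    then have "z ^ (n + 1) * z ^ Suc (n - i) = z ^ (2 * n + 2 - m) * z ^ (m - i)"
      by (simp only: power_add[symmetric])
    moreover have "z ^ (n + 1) * inverse z ^ Suc (n - i) = z ^ i"
      using that \<open>m \<le> n\<close> \<open>z \<noteq> 0\<close>
      by (simp add: power_diff field_simps flip: Suc_diff_le)
    ultimately show ?thesis
      by (simp add: right_diff_distrib)
  qed
  have "z ^ (n + 1) * ((z - inverse z) * UnA n m a ((z + inverse z) / 2))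
      = (\<Sum>i\<le>m. complex_of_real (a i) *
          (z ^ (n + 1) * (chebU (n - i) ((z + inverse z) / 2) * (z - inverse z))))"
    by (simp add: UnA_def sum_distrib_left mult_ac)
  also have "\<dots> = (\<Sum>i\<le>m. complex_of_real (a i) * (z ^ (2 * n + 2 - m) * z ^ (m - i) - z ^ i))"
    using term_eq by (simp add: chebU_Joukowski[OF \<open>z \<noteq> 0\<close>])
  also have "\<dots> = poly (monom 1 (2 * n + 2 - m) * PA_poly m a - PA_reciprocal_poly m a) z"
    by (simp add: poly_PA_poly PA_def poly_PA_reciprocal_poly poly_monom sum_distrib_left
        sum_subtractf right_diff_distrib mult_ac)
  finally show ?thesis .
qed

lemma UnA_Joukowski_eq_0:
  fixes z :: complex
  assumes "norm z > 1" and "m \<le> n"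
    and "poly (monom 1 (2 * n + 2 - m) * PA_poly m a - PA_reciprocal_poly m a) z = 0"
  shows "UnA n m a ((z + inverse z) / 2) = 0"
proof -
  have "norm (inverse z) < 1"
    using assms(1) by (simp add: norm_inverse inverse_less_1_iff)
  then have "z \<noteq> 0" and "z - inverse z \<noteq> 0"
    using assms(1) by auto
  then show ?thesis
    using UnA_Joukowski[OF \<open>z \<noteq> 0\<close> \<open>m \<le> n\<close>, of a] assms(3) by simp
qed

theorem theorem5p2:
  fixes m :: nat and a :: "nat \<Rightarrow> real" and \<omega> :: complex
  assumes "m \<ge> 1" and "a 0 \<noteq> 0" and "a m \<noteq> 0"
    and "PA m a \<omega> = 0" and "norm \<omega> > 1"
  shows "\<forall>\<epsilon>>0. \<exists>n0. \<forall>n>n0. n \<ge> m \<longrightarrow>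
           (\<exists>\<xi>. UnA n m a \<xi> = 0 \<and> norm (\<xi> - (\<omega> + inverse \<omega>) / 2) < \<epsilon>)"
proof (intro allI impI)
  fix \<epsilon> :: real
  assume "\<epsilon> > 0"
  define \<delta> where "\<delta> = min \<epsilon> (norm \<omega> - 1)"
  have "\<delta> > 0"
    using \<open>\<epsilon> > 0\<close> \<open>norm \<omega> > 1\<close> by (simp add: \<delta>_def)
  then have "eventually (\<lambda>e. \<exists>z. poly (monom 1 e * PA_poly m a - PA_reciprocal_poly m a) z = 0
      \<and> norm (z - \<omega>) < \<delta>) sequentially"
    using PA_poly_nonzero[of a m] assms(3-5)
    by (intro eventually_root_near_root) (simp_all add: poly_PA_poly)
  then obtain N where N: "\<And>e. e \<ge> N \<Longrightarrow> \<exists>z. poly (monom 1 e * PA_poly m a - PA_reciprocal_poly m a) z = 0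
      \<and> norm (z - \<omega>) < \<delta>"
    unfolding eventually_sequentially by blast
  have "\<exists>\<xi>. UnA n m a \<xi> = 0 \<and> norm (\<xi> - (\<omega> + inverse \<omega>) / 2) < \<epsilon>" if "n > N + m" "n \<ge> m" for n
  proof -
    have "2 * n + 2 - m \<ge> N"
      using \<open>n > N + m\<close> by arith
    then obtain z where root: "poly (monom 1 (2 * n + 2 - m) * PA_poly m a - PA_reciprocal_poly m a) z = 0"
      and close: "norm (z - \<omega>) < \<delta>"
      using N by blast
    have "norm z > 1"
      using close norm_triangle_ineq2[of \<omega> z] by (simp add: \<delta>_def norm_minus_commute)
    then have "UnA n m a ((z + inverse z) / 2) = 0"
      using UnA_Joukowski_eq_0 \<open>n \<ge> m\<close> root by blast
    moreover have "norm ((z + inverse z) / 2 - (\<omega> + inverse \<omega>) / 2) < \<epsilon>"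
      using norm_Joukowski_diff_le[of z \<omega>] \<open>norm z > 1\<close> \<open>norm \<omega> > 1\<close> close by (simp add: \<delta>_def)
    ultimately show ?thesis
      by blast
  qed
  then show "\<exists>n0. \<forall>n>n0. n \<ge> m \<longrightarrow>
      (\<exists>\<xi>. UnA n m a \<xi> = 0 \<and> norm (\<xi> - (\<omega> + inverse \<omega>) / 2) < \<epsilon>)"
    by blast
qed

end
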